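(* Let $M\in\mathbb{N}$ and let $c$ and $c_j$, $j\geq 1$, be proper series in $\ell_{\infty,M}(X^\ast,\mathbb{K})$ with $\|c-c_j\|_{\ell_\infty,M}\to 0$ as $j\to\infty$. Then for $N\in\mathbb{N}$ sufficiently large, $$\sum_{n=1}^\infty \|c^{\sqcup\!\sqcup\, n}-c_j^{\sqcup\!\sqcup\, n}\|_{\ell_\infty,N}\to 0\quad\text{as } j\to\infty.$$
   Context: $\mathbb{K}\in\{\mathbb{R},\mathbb{C}\}$. $X=\{x_0,\ldots,x_m\}$ is a finite alphabet, $X^\ast$ its set of words (including the empty word $\emptyset$), $|\eta|$ the length of $\eta$. A series $c\colon X^\ast\to\mathbb{K}$ is proper if $(c,\emptyset)=0$. For $M>0$, $\|c\|_{\ell_\infty,M}=\sup_\eta|(c,\eta)|/(M^{|\eta|}|\eta|!)$ and $\ell_{\infty,M}(X^\ast,\mathbb{K})$ is the Banach space of series with finite such norm. The shuffle product is the bilinear product determined on words by $(x_i\eta)\sqcup\!\sqcup(x_j\xi)=x_i(\eta\sqcup\!\sqcup(x_j\xi))+x_j((x_i\eta)\sqcup\!\sqcup\xi)$, $\eta\sqcup\!\sqcup\emptyset=\emptyset\sqcup\!\sqcup\eta=\eta$, extended bilinearly to series; $c^{\sqcup\!\sqcup n}$ denotes the $n$-fold shuffle power. *)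

theory Defs
  imports "HOL-Analysis.Analysis"
begin

type_synonym ('a, 'k) series = "'a list \<Rightarrow> 'k"

definition proper :: "('a, 'k::zero) series \<Rightarrow> bool" where
  "proper c \<longleftrightarrow> c [] = 0"

definition ell_weight :: "real \<Rightarrow> ('a, 'k::real_normed_vector) series \<Rightarrow> 'a list \<Rightarrow> real" where
  "ell_weight M c \<eta> = norm (c \<eta>) / (M ^ length \<eta> * fact (length \<eta>))"

definition ell_norm :: "real \<Rightarrow> ('a, 'k::real_normed_vector) series \<Rightarrow> real" where
  "ell_norm M c = (SUP \<eta>. ell_weight M c \<eta>)"

definition in_ell :: "real \<Rightarrow> ('a, 'k::real_normed_vector) series \<Rightarrow> bool" where
  "in_ell M c \<longleftrightarrow> bdd_above (range (ell_weight M c))"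

text \<open>Coefficient of the word eta in the shuffle product of words xi and zeta.\<close>
fun shw :: "'a list \<Rightarrow> 'a list \<Rightarrow> 'a list \<Rightarrow> nat" where
  "shw [] z e = (if e = z then 1 else 0)"
| "shw (a # x) [] e = (if e = a # x then 1 else 0)"
| "shw (a # x) (b # z) [] = 0"
| "shw (a # x) (b # z) (d # e) =
     (if d = a then shw x (b # z) e else 0) + (if d = b then shw (a # x) z e else 0)"

text \<open>Shuffle product of series (alphabet finite, so the sum is finite).\<close>
definition shuffle :: "('a::finite, 'k::comm_ring_1) series \<Rightarrow> ('a, 'k) series \<Rightarrow> ('a, 'k) series" where
  "shuffle c d \<eta> = (\<Sum>(x, z) \<in> {(x, z). length x + length z = length \<eta>}.
      c x * d z * of_nat (shw x z \<eta>))"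

fun shpow :: "('a::finite, 'k::comm_ring_1) series \<Rightarrow> nat \<Rightarrow> ('a, 'k) series" where
  "shpow c 0 = (\<lambda>\<eta>. if \<eta> = [] then 1 else 0)"
| "shpow c (Suc n) = shuffle c (shpow c n)"

end

theory Submission
  imports Defs
begin

(* Bound series by length majorants: |c(eta)| <= K R^|eta| |eta|! with R = M.
   Splitting the shuffle product along the first letter of eta bounds
   |(d sh e)(eta)| by the binomial convolution of majorants of d and e; for a
   proper d with constant R and an e with constant 2R the convolution sums a
   geometric series, so |(d sh e)(eta)| <= a b (2R)^|eta| |eta|!. Together with
   c^(n+1) - c_j^(n+1) = (c - c_j) sh c^n + c_j sh (c^n - c_j^n) this gives
   |(c^n - c_j^n)(eta)| <= e_j (2T)^n (2R)^|eta| |eta|! with e_j = ||c - c_j||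
   and T = ||c|| + 2 (once e_j <= 1). Shuffle powers of proper series vanish
   on words shorter than n, so for N >= 8 T R the N-norm of c^n - c_j^n is at
   most e_j 2^-n, and the whole series is at most e_j, which tends to 0. *)

lemma finite_length_pairs:
  "finite {(x :: 'a::finite list, z :: 'a list). length x + length z = L}"
proof -
  have "finite {xs :: 'a list. set xs \<subseteq> UNIV \<and> length xs \<le> L}"
    by (rule finite_lists_length_le) simp
  from finite_cartesian_product[OF this this] show ?thesis
    by (rule finite_subset[rotated]) auto
qed

lemma length_pairs_Cons_left:
  "{(x, z). length x + length z = Suc L \<and> x \<noteq> [] \<and> hd x = a} =
     (\<lambda>(x, z). (a # x, z)) ` {(x, z). length x + length z = L}"
proof (intro equalityI subsetI)
  fix p :: "'a list \<times> 'b list"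
  assume "p \<in> {(x, z). length x + length z = Suc L \<and> x \<noteq> [] \<and> hd x = a}"
  then obtain x z where "p = (a # x, z)" "length x + length z = L"
    by (cases p; cases "fst p") auto
  then show "p \<in> (\<lambda>(x, z). (a # x, z)) ` {(x, z). length x + length z = L}" by force
qed auto

lemma length_pairs_Cons_right:
  "{(x, z). length x + length z = Suc L \<and> z \<noteq> [] \<and> hd z = a} =
     (\<lambda>(x, z). (x, a # z)) ` {(x, z). length x + length z = L}"
proof (intro equalityI subsetI)
  fix p :: "'a list \<times> 'b list"
  assume "p \<in> {(x, z). length x + length z = Suc L \<and> z \<noteq> [] \<and> hd z = a}"
  then obtain x z where "p = (x, a # z)" "length x + length z = L"
    by (cases p; cases "snd p") auto
  then show "p \<in> (\<lambda>(x, z). (x, a # z)) ` {(x, z). length x + length z = L}" by force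
qed auto

lemma shw_Nil_right: "shw x [] \<eta> = (if \<eta> = x then 1 else 0)"
  by (cases x) auto

lemma shw_Cons:
  "shw x z (a # \<eta>) =
     (if x \<noteq> [] \<and> hd x = a then shw (tl x) z \<eta> else 0) +
     (if z \<noteq> [] \<and> hd z = a then shw x (tl z) \<eta> else 0)"
  by (cases x; cases z) (auto simp: shw_Nil_right)

lemma shuffle_Nil: "shuffle c d [] = c [] * d []"
proof -
  have "{(x :: 'a list, z :: 'a list). length x + length z = 0} = {([], [])}" by auto
  then show ?thesis by (simp add: shuffle_def)
qed

lemma shuffle_Cons:
  fixes c d :: "('a::finite, 'k::comm_ring_1) series"
  shows "shuffle c d (a # \<eta>) = shuffle (\<lambda>x. c (a # x)) d \<eta> + shuffle c (\<lambda>z. d (a # z)) \<eta>"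
proof -
  let ?P = "\<lambda>L. {(x :: 'a list, z :: 'a list). length x + length z = L}"
  let ?l = "\<lambda>(x, z). if x \<noteq> [] \<and> hd x = a then c x * d z * of_nat (shw (tl x) z \<eta>) else 0"
  let ?r = "\<lambda>(x, z). if z \<noteq> [] \<and> hd z = a then c x * d z * of_nat (shw x (tl z) \<eta>) else 0"
  have "shuffle c d (a # \<eta>) = sum ?l (?P (Suc (length \<eta>))) + sum ?r (?P (Suc (length \<eta>)))"
    unfolding shuffle_def sum.distrib[symmetric]
    by (rule sum.cong) (auto simp: shw_Cons distrib_left)
  also have "sum ?l (?P (Suc (length \<eta>))) = sum ?l ((\<lambda>(x, z). (a # x, z)) ` ?P (length \<eta>))"
    unfolding length_pairs_Cons_left[symmetric]
    by (rule sum.mono_neutral_right[OF finite_length_pairs]) (auto split: if_splits)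
  also have "\<dots> = shuffle (\<lambda>x. c (a # x)) d \<eta>"
    by (simp add: sum.reindex inj_on_def shuffle_def split_def)
  also have "sum ?r (?P (Suc (length \<eta>))) = sum ?r ((\<lambda>(x, z). (x, a # z)) ` ?P (length \<eta>))"
    unfolding length_pairs_Cons_right[symmetric]
    by (rule sum.mono_neutral_right[OF finite_length_pairs]) (auto split: if_splits)
  also have "\<dots> = shuffle c (\<lambda>z. d (a # z)) \<eta>"
    by (simp add: sum.reindex inj_on_def shuffle_def split_def)
  finally show ?thesis .
qed

definition binomial_convolution ::
    "(nat \<Rightarrow> 'a::comm_semiring_1) \<Rightarrow> (nat \<Rightarrow> 'a) \<Rightarrow> nat \<Rightarrow> 'a" where
  "binomial_convolution f g L = (\<Sum>i\<le>L. of_nat (L choose i) * f i * g (L - i))"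

lemma binomial_convolution_0 [simp]: "binomial_convolution f g 0 = f 0 * g 0"
  by (simp add: binomial_convolution_def)

lemma binomial_convolution_Suc:
  "binomial_convolution f g (Suc L) =
     binomial_convolution (\<lambda>i. f (Suc i)) g L + binomial_convolution f (\<lambda>j. g (Suc j)) L"
proof -
  have "binomial_convolution f g (Suc L) =
      f 0 * g (Suc L) + (\<Sum>i\<le>L. of_nat (Suc L choose Suc i) * f (Suc i) * g (L - i))"
    unfolding binomial_convolution_def by (subst sum.atMost_Suc_shift) simp
  also have "\<dots> = binomial_convolution (\<lambda>i. f (Suc i)) g L +
      (f 0 * g (Suc L) + (\<Sum>i\<le>L. of_nat (L choose Suc i) * f (Suc i) * g (L - i)))"
    by (simp add: binomial_convolution_def sum.distrib distrib_right algebra_simps)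
  also have "f 0 * g (Suc L) + (\<Sum>i\<le>L. of_nat (L choose Suc i) * f (Suc i) * g (L - i)) =
      (\<Sum>i\<le>Suc L. of_nat (L choose i) * f i * g (Suc L - i))"
    by (subst sum.atMost_Suc_shift) simp
  also have "\<dots> = binomial_convolution f (\<lambda>j. g (Suc j)) L"
    unfolding binomial_convolution_def sum.atMost_Suc
    by (auto simp: Suc_diff_le binomial_eq_0 intro!: sum.cong)
  finally show ?thesis .
qed

lemma norm_shuffle_le_binomial_convolution:
  fixes c d :: "('a::finite, 'k::real_normed_field) series"
  assumes "\<And>x. norm (c x) \<le> f (length x)" and "\<And>z. norm (d z) \<le> g (length z)"
  shows "norm (shuffle c d \<eta>) \<le> binomial_convolution f g (length \<eta>)"
  using assms
proof (induction \<eta> arbitrary: c d f g)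
  case Nil
  show ?case
    using Nil.prems(1)[of "[]"] Nil.prems(2)[of "[]"]
    by (simp add: shuffle_Nil norm_mult mult_mono')
next
  case (Cons a \<eta>)
  have "norm (shuffle c d (a # \<eta>)) \<le>
      norm (shuffle (\<lambda>x. c (a # x)) d \<eta>) + norm (shuffle c (\<lambda>z. d (a # z)) \<eta>)"
    unfolding shuffle_Cons by (rule norm_triangle_ineq)
  also have "\<dots> \<le> binomial_convolution (\<lambda>i. f (Suc i)) g (length \<eta>) +
      binomial_convolution f (\<lambda>j. g (Suc j)) (length \<eta>)"
    using Cons.prems Cons.prems(1)[of "a # x" for x] Cons.prems(2)[of "a # z" for z]
    by (intro add_mono Cons.IH) auto
  finally show ?case by (simp add: binomial_convolution_Suc)
qed

lemma sum_half_powers_le_1: "(\<Sum>i\<le>L. if i = 0 then 0 else (1 / 2 :: real) ^ i) \<le> 1"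
proof -
  have "(\<Sum>i\<le>L. if i = 0 then 0 else (1 / 2 :: real) ^ i) = 1 - (1 / 2) ^ L"
    by (induction L) (simp_all add: field_simps)
  then show ?thesis by simp
qed

lemma norm_shuffle_le:
  fixes c d :: "('a::finite, 'k::real_normed_field) series"
  assumes "0 \<le> R" and "0 \<le> a" and "0 \<le> b" and "proper c"
    and "\<And>x. norm (c x) \<le> a * R ^ length x * fact (length x)"
    and "\<And>z. norm (d z) \<le> b * (2 * R) ^ length z * fact (length z)"
  shows "norm (shuffle c d \<eta>) \<le> a * b * (2 * R) ^ length \<eta> * fact (length \<eta>)"
proof -
  define L where "L = length \<eta>"
  define C where "C = a * b * (2 * R) ^ L * fact L"
  have "norm (shuffle c d \<eta>) \<le>
      binomial_convolution (\<lambda>i. if i = 0 then 0 else a * R ^ i * fact i)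
        (\<lambda>j. b * (2 * R) ^ j * fact j) L"
    unfolding L_def using assms(4-6)
    by (intro norm_shuffle_le_binomial_convolution) (auto simp: proper_def)
  also have "\<dots> = (\<Sum>i\<le>L. C * (if i = 0 then 0 else (1 / 2) ^ i))"
    unfolding binomial_convolution_def
  proof (intro sum.cong refl)
    fix i assume "i \<in> {..L}"
    then have "i \<le> L" by simp
    have "(2 * R) ^ L = (2 * R) ^ i * (2 * R) ^ (L - i)"
      using \<open>i \<le> L\<close> by (metis power_add le_add_diff_inverse)
    then show "of_nat (L choose i) * (if i = 0 then 0 else a * R ^ i * fact i) *
        (b * (2 * R) ^ (L - i) * fact (L - i)) = C * (if i = 0 then 0 else (1 / 2) ^ i)"
      using \<open>i \<le> L\<close> by (simp add: C_def binomial_fact power_divide power_mult_distrib field_simps)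
  qed
  also have "\<dots> \<le> C"
    using sum_half_powers_le_1[of L] assms(1-3)
    by (simp add: sum_distrib_left[symmetric] C_def mult_left_le)
  finally show ?thesis by (simp add: C_def L_def)
qed

lemma shuffle_eq_0_if_short:
  assumes "proper c" and "\<And>z. length z < n \<Longrightarrow> d z = 0" and "length \<eta> \<le> n"
  shows "shuffle c d \<eta> = 0"
  unfolding shuffle_def
proof (intro sum.neutral ballI, clarify)
  fix x z :: "'a list" assume "length x + length z = length \<eta>"
  with assms show "c x * d z * of_nat (shw x z \<eta>) = 0"
    by (cases x) (auto simp: proper_def)
qed

lemma shpow_eq_0_if_short: "proper c \<Longrightarrow> length \<eta> < n \<Longrightarrow> shpow c n \<eta> = 0"
proof (induction n arbitrary: \<eta>)
  case (Suc n)
  then show ?case by (auto intro: shuffle_eq_0_if_short[where n = n])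
qed simp

lemma norm_shpow_le:
  fixes c :: "('a::finite, 'k::real_normed_field) series"
  assumes "0 \<le> R" and "0 \<le> K" and "proper c"
    and "\<And>x. norm (c x) \<le> K * R ^ length x * fact (length x)"
  shows "norm (shpow c n \<eta>) \<le> K ^ n * (2 * R) ^ length \<eta> * fact (length \<eta>)"
proof (induction n arbitrary: \<eta>)
  case 0
  show ?case using assms(1) by simp
next
  case (Suc n)
  then show ?case
    using norm_shuffle_le[OF assms(1,2) zero_le_power[OF assms(2)] assms(3,4)] by simp
qed

lemma shuffle_diff:
  "shuffle c d \<eta> - shuffle c' d' \<eta> =
     shuffle (\<lambda>x. c x - c' x) d \<eta> + shuffle c' (\<lambda>z. d z - d' z) \<eta>"
  unfolding shuffle_def
  by (simp add: sum_subtractf[symmetric] sum.distrib[symmetric] case_prod_beta algebra_simps)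

lemma norm_shpow_diff_le:
  fixes c c' :: "('a::finite, 'k::real_normed_field) series"
  assumes "0 \<le> R" and "0 \<le> \<epsilon>" and "1 \<le> T" and "proper c" and "proper c'"
    and c: "\<And>x. norm (c x) \<le> T * R ^ length x * fact (length x)"
    and c': "\<And>x. norm (c' x) \<le> T * R ^ length x * fact (length x)"
    and diff: "\<And>x. norm (c x - c' x) \<le> \<epsilon> * R ^ length x * fact (length x)"
  shows "norm (shpow c n \<eta> - shpow c' n \<eta>) \<le>
    \<epsilon> * (2 * T) ^ n * (2 * R) ^ length \<eta> * fact (length \<eta>)"
proof (induction n arbitrary: \<eta>)
  case 0
  show ?case using assms(1,2) by simp
next
  case (Suc n)
  define X where "X = (2 * R) ^ length \<eta> * fact (length \<eta>)"
  have "0 \<le> X" using assms(1) by (simp add: X_def)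
  have "proper (\<lambda>x. c x - c' x)" using assms(4,5) by (simp add: proper_def)
  have first: "norm (shuffle (\<lambda>x. c x - c' x) (shpow c n) \<eta>) \<le> \<epsilon> * T ^ n * X"
    using norm_shuffle_le[OF assms(1,2) _ \<open>proper (\<lambda>x. c x - c' x)\<close> diff
        norm_shpow_le[OF assms(1) _ assms(4) c]] assms(3)
    by (simp add: X_def mult.assoc)
  have second:
    "norm (shuffle c' (\<lambda>z. shpow c n z - shpow c' n z) \<eta>) \<le> T * (\<epsilon> * (2 * T) ^ n) * X"
    using norm_shuffle_le[OF assms(1) _ _ assms(5) c' Suc.IH] assms(2,3)
    by (simp add: X_def mult.assoc)
  have growth: "\<epsilon> * T ^ n + T * (\<epsilon> * (2 * T) ^ n) \<le> \<epsilon> * (2 * T) ^ Suc n"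
  proof -
    have "\<epsilon> * T ^ n \<le> \<epsilon> * (2 * T) ^ n"
      using assms(2,3) by (intro mult_left_mono power_mono) auto
    also have "\<epsilon> * (2 * T) ^ n \<le> T * (\<epsilon> * (2 * T) ^ n)"
      using mult_right_mono[OF assms(3), of "\<epsilon> * (2 * T) ^ n"] assms(2,3) by simp
    finally show ?thesis by (simp add: algebra_simps)
  qed
  have "norm (shpow c (Suc n) \<eta> - shpow c' (Suc n) \<eta>) \<le>
      norm (shuffle (\<lambda>x. c x - c' x) (shpow c n) \<eta>) +
      norm (shuffle c' (\<lambda>z. shpow c n z - shpow c' n z) \<eta>)"
    by (simp add: shuffle_diff norm_triangle_ineq)
  also have "\<dots> \<le> (\<epsilon> * T ^ n + T * (\<epsilon> * (2 * T) ^ n)) * X"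
    using add_mono[OF first second] by (simp add: algebra_simps)
  also have "\<dots> \<le> \<epsilon> * (2 * T) ^ Suc n * X"
    using growth \<open>0 \<le> X\<close> by (rule mult_right_mono)
  finally show ?case by (simp add: X_def mult.assoc)
qed

lemma ell_weight_le_ell_norm: "in_ell M c \<Longrightarrow> ell_weight M c \<eta> \<le> ell_norm M c"
  unfolding in_ell_def ell_norm_def by (intro cSUP_upper) auto

lemma ell_norm_nonneg: "in_ell M c \<Longrightarrow> 0 \<le> ell_norm M c"
  using ell_weight_le_ell_norm[of M c "[]"]
  by (auto simp: ell_weight_def intro: order_trans[OF norm_ge_zero])

lemma ell_weight_le_iff:
  assumes "0 < M"
  shows "ell_weight M c \<eta> \<le> B \<longleftrightarrow> norm (c \<eta>) \<le> B * M ^ length \<eta> * fact (length \<eta>)"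
  using assms by (simp add: ell_weight_def pos_divide_le_eq mult.assoc)

lemma norm_le_ell_norm:
  assumes "0 < M" and "in_ell M c"
  shows "norm (c \<eta>) \<le> ell_norm M c * M ^ length \<eta> * fact (length \<eta>)"
  using ell_weight_le_ell_norm[OF assms(2), of \<eta>] by (simp add: ell_weight_le_iff[OF assms(1)])

lemma in_ell_diff:
  assumes "0 < M" and "in_ell M c" and "in_ell M d"
  shows "in_ell M (\<lambda>\<eta>. c \<eta> - d \<eta>)"
  unfolding in_ell_def
proof (rule bdd_aboveI2)
  fix \<eta> :: "'a list"
  have "norm (c \<eta> - d \<eta>) \<le> (ell_norm M c + ell_norm M d) * M ^ length \<eta> * fact (length \<eta>)"
    using order_trans[OF norm_triangle_ineq4
        add_mono[OF norm_le_ell_norm[OF assms(1,2)] norm_le_ell_norm[OF assms(1,3)]]]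
    by (simp add: algebra_simps)
  then show "ell_weight M (\<lambda>\<eta>. c \<eta> - d \<eta>) \<eta> \<le> ell_norm M c + ell_norm M d"
    using assms(1) by (simp add: ell_weight_le_iff)
qed

lemma in_ellI: "(\<And>\<eta>. ell_weight M c \<eta> \<le> B) \<Longrightarrow> in_ell M c"
  unfolding in_ell_def by (rule bdd_aboveI2)

lemma ell_norm_leI: "(\<And>\<eta>. ell_weight M c \<eta> \<le> B) \<Longrightarrow> ell_norm M c \<le> B"
  unfolding ell_norm_def by (rule cSUP_least) auto

lemma ell_weight_le_half_power:
  fixes d :: "('a, 'k::real_normed_vector) series"
  assumes "0 \<le> R" and "1 \<le> B" and "4 * B * R \<le> N" and "0 < N" and "0 \<le> \<epsilon>"
    and bound: "norm (d \<eta>) \<le> \<epsilon> * B ^ n * (2 * R) ^ length \<eta> * fact (length \<eta>)"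
    and short: "length \<eta> < n \<Longrightarrow> d \<eta> = 0"
  shows "ell_weight N d \<eta> \<le> \<epsilon> * (1 / 2) ^ n"
proof (cases "length \<eta> < n")
  case True
  then show ?thesis using short assms(5) by (simp add: ell_weight_def)
next
  case False
  define q where "q = 2 * R / N"
  have "0 \<le> q" using assms(1,4) by (simp add: q_def)
  have "B * q \<le> 1 / 2" using assms(3,4) by (simp add: q_def field_simps)
  moreover have "q \<le> B * q" using mult_right_mono[OF assms(2) \<open>0 \<le> q\<close>] by simp
  ultimately have "q \<le> 1" by simp
  have "ell_weight N d \<eta> \<le> \<epsilon> * B ^ n * q ^ length \<eta>"
    unfolding ell_weight_le_iff[OF assms(4)] using bound assms(4)
    by (simp add: q_def power_divide)
  also have "\<dots> \<le> \<epsilon> * B ^ n * q ^ n"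
    using False \<open>0 \<le> q\<close> \<open>q \<le> 1\<close> assms(2,5) by (intro mult_left_mono power_decreasing) auto
  also have "\<dots> = \<epsilon> * (B * q) ^ n" by (simp add: power_mult_distrib)
  also have "\<dots> \<le> \<epsilon> * (1 / 2) ^ n"
    using \<open>B * q \<le> 1 / 2\<close> \<open>0 \<le> q\<close> assms(2,5) by (intro mult_left_mono power_mono) auto
  finally show ?thesis .
qed

lemma suminf_Suc_le_half_powers:
  fixes a :: "nat \<Rightarrow> real"
  assumes "\<And>n. 0 \<le> a n" and "\<And>n. a n \<le> \<epsilon> * (1 / 2) ^ n"
  shows "summable (\<lambda>n. a (Suc n))" and "0 \<le> (\<Sum>n. a (Suc n))" and "(\<Sum>n. a (Suc n)) \<le> \<epsilon>"
proof -
  have "(\<lambda>n. \<epsilon> / 2 * (1 / 2) ^ n) sums (\<epsilon> / 2 * (1 / (1 - 1 / 2)))"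
    by (intro sums_mult geometric_sums) simp
  then have geom: "(\<lambda>n. \<epsilon> * (1 / 2) ^ Suc n) sums \<epsilon>" by simp
  show summable: "summable (\<lambda>n. a (Suc n))"
  proof (rule summable_comparison_test'[OF sums_summable[OF geom]])
    fix n show "norm (a (Suc n)) \<le> \<epsilon> * (1 / 2) ^ Suc n"
      using assms(1,2)[of "Suc n"] by simp
  qed
  show "0 \<le> (\<Sum>n. a (Suc n))" using summable assms(1) by (rule suminf_nonneg)
  show "(\<Sum>n. a (Suc n)) \<le> \<epsilon>"
    using suminf_le[OF assms(2) summable sums_summable[OF geom]] sums_unique[OF geom] by simp
qed

lemma ell_norm_shpow_diff_le:
  fixes c c' :: "('a::finite, 'k::real_normed_field) series"
  assumes "0 < M" and "proper c" and "proper c'" and "in_ell M c" and "in_ell M c'"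
    and small: "ell_norm M (\<lambda>\<eta>. c \<eta> - c' \<eta>) \<le> 1"
    and large: "8 * (ell_norm M c + 2) * M \<le> N"
  shows "in_ell N (\<lambda>\<eta>. shpow c n \<eta> - shpow c' n \<eta>)"
    and "ell_norm N (\<lambda>\<eta>. shpow c n \<eta> - shpow c' n \<eta>) \<le>
      ell_norm M (\<lambda>\<eta>. c \<eta> - c' \<eta>) * (1 / 2) ^ n"
proof -
  define K where "K = ell_norm M c"
  define \<epsilon> where "\<epsilon> = ell_norm M (\<lambda>\<eta>. c \<eta> - c' \<eta>)"
  have "0 \<le> K" and "0 \<le> \<epsilon>"
    using assms(1,4,5) by (simp_all add: K_def \<epsilon>_def ell_norm_nonneg in_ell_diff)
  have diff: "norm (c x - c' x) \<le> \<epsilon> * M ^ length x * fact (length x)" for x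
    using norm_le_ell_norm[OF assms(1) in_ell_diff[OF assms(1,4,5)]] by (simp add: \<epsilon>_def)
  have c: "norm (c x) \<le> (K + 2) * M ^ length x * fact (length x)" for x
  proof -
    have "norm (c x) \<le> K * (M ^ length x * fact (length x))"
      using norm_le_ell_norm[OF assms(1,4), of x] by (simp add: K_def mult.assoc)
    also have "\<dots> \<le> (K + 2) * (M ^ length x * fact (length x))"
      using assms(1) by (intro mult_right_mono) auto
    finally show ?thesis by (simp add: mult.assoc)
  qed
  have c': "norm (c' x) \<le> (K + 2) * M ^ length x * fact (length x)" for x
  proof -
    have "norm (c' x) \<le> norm (c x) + norm (c x - c' x)"
      using norm_triangle_ineq4[of "c x" "c x - c' x"] by simp
    also have "\<dots> \<le> (K + \<epsilon>) * M ^ length x * fact (length x)"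
      using norm_le_ell_norm[OF assms(1,4), of x] diff[of x] by (simp add: K_def algebra_simps)
    also have "\<dots> \<le> (K + 2) * M ^ length x * fact (length x)"
      using small assms(1) by (intro mult_right_mono) (auto simp: \<epsilon>_def)
    finally show ?thesis .
  qed
  have weight: "ell_weight N (\<lambda>\<eta>. shpow c n \<eta> - shpow c' n \<eta>) \<eta> \<le> \<epsilon> * (1 / 2) ^ n" for \<eta>
  proof (rule ell_weight_le_half_power)
    show "4 * (2 * (K + 2)) * M \<le> N" using large by (simp add: K_def)
    have "0 < 8 * (K + 2) * M" using assms(1) \<open>0 \<le> K\<close> by simp
    then show "0 < N" using large by (simp add: K_def)
    show "norm (shpow c n \<eta> - shpow c' n \<eta>) \<le>
        \<epsilon> * (2 * (K + 2)) ^ n * (2 * M) ^ length \<eta> * fact (length \<eta>)"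
      using assms(1-3) \<open>0 \<le> K\<close> \<open>0 \<le> \<epsilon>\<close> by (intro norm_shpow_diff_le c c' diff) auto
    show "length \<eta> < n \<Longrightarrow> shpow c n \<eta> - shpow c' n \<eta> = 0"
      using assms(2,3) by (simp add: shpow_eq_0_if_short)
  qed (use assms(1) \<open>0 \<le> K\<close> \<open>0 \<le> \<epsilon>\<close> in auto)
  show "in_ell N (\<lambda>\<eta>. shpow c n \<eta> - shpow c' n \<eta>)" using weight by (rule in_ellI)
  show "ell_norm N (\<lambda>\<eta>. shpow c n \<eta> - shpow c' n \<eta>) \<le> \<epsilon> * (1 / 2) ^ n"
    using weight by (rule ell_norm_leI)
qed

lemma summable_ell_norm_shpow_diff:
  fixes c c' :: "('a::finite, 'k::real_normed_field) series"
  assumes "0 < M" and "proper c" and "proper c'" and "in_ell M c" and "in_ell M c'"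
    and "ell_norm M (\<lambda>\<eta>. c \<eta> - c' \<eta>) \<le> 1"
    and "8 * (ell_norm M c + 2) * M \<le> N"
  shows "summable (\<lambda>n. ell_norm N (\<lambda>\<eta>. shpow c (Suc n) \<eta> - shpow c' (Suc n) \<eta>))"
    and "0 \<le> (\<Sum>n. ell_norm N (\<lambda>\<eta>. shpow c (Suc n) \<eta> - shpow c' (Suc n) \<eta>))"
    and "(\<Sum>n. ell_norm N (\<lambda>\<eta>. shpow c (Suc n) \<eta> - shpow c' (Suc n) \<eta>)) \<le>
      ell_norm M (\<lambda>\<eta>. c \<eta> - c' \<eta>)"
proof -
  let ?a = "\<lambda>n. ell_norm N (\<lambda>\<eta>. shpow c n \<eta> - shpow c' n \<eta>)"
  have "0 \<le> ?a n" and "?a n \<le> ell_norm M (\<lambda>\<eta>. c \<eta> - c' \<eta>) * (1 / 2) ^ n" for n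
    using ell_norm_shpow_diff_le[OF assms] ell_norm_nonneg by blast+
  from suminf_Suc_le_half_powers[of ?a, OF this] show
    "summable (\<lambda>n. ?a (Suc n))" and "0 \<le> (\<Sum>n. ?a (Suc n))"
    and "(\<Sum>n. ?a (Suc n)) \<le> ell_norm M (\<lambda>\<eta>. c \<eta> - c' \<eta>)" .
qed

theorem lemma3p5:
  fixes c :: "('a::finite, 'k::real_normed_field) series"
    and cj :: "nat \<Rightarrow> ('a, 'k) series"
    and M :: nat
  assumes "M > 0"
    and "proper c" and "in_ell (real M) c"
    and "\<And>j. proper (cj j)" and "\<And>j. in_ell (real M) (cj j)"
    and "(\<lambda>j. ell_norm (real M) (\<lambda>\<eta>. c \<eta> - cj j \<eta>)) \<longlonglongrightarrow> 0"
  shows "\<exists>N0::nat. \<forall>N\<ge>N0. N > 0 \<and>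
     (\<forall>\<^sub>F j in sequentially.
        (\<forall>n. in_ell (real N) (\<lambda>\<eta>. shpow c n \<eta> - shpow (cj j) n \<eta>)) \<and>
        summable (\<lambda>n. ell_norm (real N) (\<lambda>\<eta>. shpow c (Suc n) \<eta> - shpow (cj j) (Suc n) \<eta>))) \<and>
     (\<lambda>j. \<Sum>n. ell_norm (real N) (\<lambda>\<eta>. shpow c (Suc n) \<eta> - shpow (cj j) (Suc n) \<eta>))
        \<longlonglongrightarrow> 0"
proof (intro exI allI impI conjI)
  fix N assume "nat \<lceil>8 * (ell_norm (real M) c + 2) * real M\<rceil> \<le> N"
  then have large: "8 * (ell_norm (real M) c + 2) * real M \<le> real N" by linarith
  have M: "0 < real M" using assms(1) by simp
  have "0 < 8 * (ell_norm (real M) c + 2) * real M" using M ell_norm_nonneg[OF assms(3)] by simp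
  with large show "N > 0" by simp
  have small: "\<forall>\<^sub>F j in sequentially. ell_norm (real M) (\<lambda>\<eta>. c \<eta> - cj j \<eta>) \<le> 1"
    using order_tendstoD(2)[OF assms(6), of 1] by (auto elim: eventually_mono)
  note pair = ell_norm_shpow_diff_le[OF M assms(2,4) assms(3,5) _ large]
  note tail = summable_ell_norm_shpow_diff[OF M assms(2,4) assms(3,5) _ large]
  show "\<forall>\<^sub>F j in sequentially.
      (\<forall>n. in_ell (real N) (\<lambda>\<eta>. shpow c n \<eta> - shpow (cj j) n \<eta>)) \<and>
      summable (\<lambda>n. ell_norm (real N) (\<lambda>\<eta>. shpow c (Suc n) \<eta> - shpow (cj j) (Suc n) \<eta>))"
    using small by (rule eventually_mono) (blast intro: pair tail(1))
  show "(\<lambda>j. \<Sum>n. ell_norm (real N) (\<lambda>\<eta>. shpow c (Suc n) \<eta> - shpow (cj j) (Suc n) \<eta>))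
      \<longlonglongrightarrow> 0"
    by (rule tendsto_sandwich[OF _ _ tendsto_const assms(6)])
      (use small in \<open>auto elim!: eventually_mono intro: tail(2,3) simp del: shpow.simps\<close>)
qed

end
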